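(* Let $W_1(u)=\sum_{k\ge0}\omega_ku^{-k}$. Let $A'\in\mathrm{Seq}_{r,t}$ with $a'_1=-1$, $a'_2=1$. Then in $\operatorname{End}(A')[[u^{-1}]]$ $$e_1^{(A')}\frac{1}{u-y_1}e_1^{(A')}=\frac{W_1^*(u)}{u}e_1^{(A')},\qquad\text{where}\qquad \frac{W^*_1(u)}{u}=\frac{W_1(-u)}{u-W_1(-u)}.$$
   Context: Let $r,t\in\mathbb N$. An $(r,t)$-sequence is a sequence $A=(a_1,\dots,a_{r+t})$ that is a permutation of $(1,\dots,1,-1,\dots,-1)$ ($r$ entries $1$, $t$ entries $-1$); $\mathrm{Seq}_{r,t}$ is the set of these, and the simple transpositions $\mathsf s_j=(j,j+1)$ of $S_{r+t}$ act on it by permuting entries. Fix complex numbers $\boldsymbol\omega=(\omega_k)_{k\in\mathbb N}$. The degenerate affine walled Brauer category $\underline{\mathrm{VB}}_{r,t}(\boldsymbol\omega)$ is the $\mathbb C$-linear category with object set $\mathrm{Seq}_{r,t}$ whose morphisms are generated by: endomorphisms $s_i^{(A)}$ of $A$ for $1\le i\le r+t-1$ with $a_i=a_{i+1}$; endomorphisms $e_i^{(A)}$ of $A$ for $1\le i\le r+t-1$ with $a_i\neq a_{i+1}$; endomorphisms $y_i^{(A)}$ of $A$ for $1\le i\le r+t$; and morphisms $\hat s_j^{(A)},\hat e_j^{(A)}:A\to\mathsf s_jA$ whenever $\mathsf s_jA\ne A$. Superscripts are usually omitted; composition $fg$ means $g$ first. A symbol $\dot s_i$ stands for $s_i$ or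 $\hat s_i$ and $\dot e_i$ for $e_i$ or $\hat e_i$; each relation is imposed for all objects and all choices of dotted symbols (possibly different on the two sides) for which both sides are defined morphisms with the same source and target. Relations: (1) $\dot s_i\dot s_i=1$; (2) $\dot s_i\dot s_j=\dot s_j\dot s_i$ for $|i-j|>1$, $\dot s_i\dot s_{i+1}\dot s_i=\dot s_{i+1}\dot s_i\dot s_{i+1}$, $\dot s_iy_j=y_j\dot s_i$ for $j\ne i,i+1$; (3) $(e_i^{(A)})^2=\omega_0e_i^{(A)}$; (4) $e_1^{(A)}y_1^ke_1^{(A)}=\omega_ke_1^{(A)}$ for all $k\in\mathbb N$ when $a_1=1,a_2=-1$; (5) $\dot s_i\dot e_j=\dot e_j\dot s_i$ and $\dot e_i\dot e_j=\dot e_j\dot e_i$ for $|i-j|>1$, $\dot e_iy_j=y_j\dot e_i$ for $j\neq i,i+1$, $y_iy_j=y_jy_i$; (6) $\hat s_i\dot e_i=\dot e_i=\dot e_i\hat s_i$, $\dot s_i\dot e_{i+1}\dot e_i=\dot s_{i+1}\dot e_i$, $\dot e_i\dot e_{i+1}\dot s_i=\dot e_i\dot s_{i+1}$, $\dot e_{i+1}\dot e_i\dot s_{i+1}=\dot e_{i+1}\dot s_i$, $\dot s_{i+1}\dot e_i\dot e_{i+1}=\dot s_i\dot e_{i+1}$, $\dot e_{i+1}\dot e_i\dot e_{i+1}=\dot e_{i+1}$, $\dot e_i\dot e_{i+1}\dot e_i=\dot e_i$; (7) $s_iy_i-y_{i+1}s_i=-1$, $s_iy_{i+1}-y_is_i=1$,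 $\hat s_iy_i-y_{i+1}\hat s_i=\hat e_i$, $\hat s_iy_{i+1}-y_i\hat s_i=-\hat e_i$; (8) $\dot e_i(y_i+y_{i+1})=0=(y_i+y_{i+1})\dot e_i$. Power series: $u$ is a formal variable; one works in $\operatorname{End}(A)[[u^{-1}]]$, with $\frac1{u-y}:=\sum_{k\ge0}y^ku^{-k-1}$; $f(-u)$ denotes substitution $u\mapsto-u$, and quotients are expanded as power series in $u^{-1}$. *)

theory Defs
  imports "HOL-Computational_Algebra.Formal_Power_Series"
begin

definition Seq :: "nat \<Rightarrow> nat \<Rightarrow> int list set" where
  "Seq r t = {A. length A = r + t \<and> set A \<subseteq> {1, -1} \<and> length (filter (\<lambda>x. x = 1) A) = r}"

definition ent :: "int list \<Rightarrow> nat \<Rightarrow> int" where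
  "ent A i = A ! (i - 1)"

text \<open>action of the simple transposition (j, j+1) (1-based) on a sequence\<close>
definition swp :: "nat \<Rightarrow> int list \<Rightarrow> int list" where
  "swp j A = A[j - 1 := A ! j, j := A ! (j - 1)]"

text \<open>A C-linear category with the finite object set Seq r t is encoded by an algebra
  (a ring with a central ring homomorphism from the complex numbers) together with
  idempotents idm A (the identities 1_A); a morphism A -> B is an element f with
  idm B * f * idm A = f, and composition is multiplication.\<close>

record 'a vbgens =
  idm :: "int list \<Rightarrow> 'a"
  gs  :: "int list \<Rightarrow> nat \<Rightarrow> 'a"
  ge  :: "int list \<Rightarrow> nat \<Rightarrow> 'a"
  gy  :: "int list \<Rightarrow> nat \<Rightarrow> 'a"
  gsh :: "int list \<Rightarrow> nat \<Rightarrow> 'a"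
  geh :: "int list \<Rightarrow> nat \<Rightarrow> 'a"

text \<open>Letters of words: S = dotted s, Sp = plain s, Sh = hat s, likewise for e; Y = y.\<close>
datatype letter = S nat | Sp nat | Sh nat | E nat | Ep nat | Eh nat | Y nat

definition stepSp :: "'a vbgens \<Rightarrow> int list \<Rightarrow> nat \<Rightarrow> (int list \<times> 'a) set" where
  "stepSp G A i = (if 1 \<le> i \<and> i < length A \<and> ent A i = ent A (i + 1)
                   then {(A, gs G A i)} else {})"
definition stepSh :: "'a vbgens \<Rightarrow> int list \<Rightarrow> nat \<Rightarrow> (int list \<times> 'a) set" where
  "stepSh G A i = (if 1 \<le> i \<and> i < length A \<and> ent A i \<noteq> ent A (i + 1)
                   then {(swp i A, gsh G A i)} else {})"
definition stepEp :: "'a vbgens \<Rightarrow> int list \<Rightarrow> nat \<Rightarrow> (int list \<times> 'a) set" where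
  "stepEp G A i = (if 1 \<le> i \<and> i < length A \<and> ent A i \<noteq> ent A (i + 1)
                   then {(A, ge G A i)} else {})"
definition stepEh :: "'a vbgens \<Rightarrow> int list \<Rightarrow> nat \<Rightarrow> (int list \<times> 'a) set" where
  "stepEh G A i = (if 1 \<le> i \<and> i < length A \<and> ent A i \<noteq> ent A (i + 1)
                   then {(swp i A, geh G A i)} else {})"

text \<open>All generators of the given letter with source A, as pairs (target, morphism).\<close>
fun step :: "'a vbgens \<Rightarrow> int list \<Rightarrow> letter \<Rightarrow> (int list \<times> 'a) set" where
  "step G A (Sp i) = stepSp G A i"
| "step G A (Sh i) = stepSh G A i"
| "step G A (S i) = stepSp G A i \<union> stepSh G A i"
| "step G A (Ep i) = stepEp G A i"
| "step G A (Eh i) = stepEh G A i"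
| "step G A (E i) = stepEp G A i \<union> stepEh G A i"
| "step G A (Y i) = (if 1 \<le> i \<and> i \<le> length A then {(A, gy G A i)} else {})"

text \<open>All defined composites along a word given in order of application (first letter first).\<close>
fun paths :: "'a::times vbgens \<Rightarrow> int list \<Rightarrow> letter list \<Rightarrow> (int list \<times> 'a) set" where
  "paths G A [] = {(A, idm G A)}"
| "paths G A (x # xs) = {(C, g * f) | B f C g. (B, f) \<in> step G A x \<and> (C, g) \<in> paths G B xs}"

text \<open>Composites of a word written in the usual order (rightmost letter applied first).\<close>
definition comp :: "'a::times vbgens \<Rightarrow> int list \<Rightarrow> letter list \<Rightarrow> (int list \<times> 'a) set" where
  "comp G A w = paths G A (rev w)"

text \<open>Relation w1 = w2, imposed for all objects and all choices of dotted symbols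
  for which both sides are defined with the same source and target.\<close>
definition rel :: "'a::times vbgens \<Rightarrow> nat \<Rightarrow> nat \<Rightarrow> letter list \<Rightarrow> letter list \<Rightarrow> bool" where
  "rel G r t w1 w2 \<longleftrightarrow> (\<forall>A\<in>Seq r t. \<forall>B f C g. (B, f) \<in> comp G A w1 \<longrightarrow> (C, g) \<in> comp G A w2
       \<longrightarrow> B = C \<longrightarrow> f = g)"

definition mor :: "'a::times vbgens \<Rightarrow> int list \<Rightarrow> int list \<Rightarrow> 'a \<Rightarrow> bool" where
  "mor G A B f \<longleftrightarrow> idm G B * f * idm G A = f"

text \<open>c is the C-algebra structure (central unital ring homomorphism); G satisfies all
  defining relations of the degenerate affine walled Brauer category VB_{r,t}(omega).\<close>
definition is_VB :: "nat \<Rightarrow> nat \<Rightarrow> (nat \<Rightarrow> complex) \<Rightarrow> (complex \<Rightarrow> 'a::ring_1) \<Rightarrow> 'a vbgens \<Rightarrow> bool" where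
  "is_VB r t \<omega> c G \<longleftrightarrow>
    \<comment> \<open>C-linear structure\<close>
    (\<forall>a b. c (a + b) = c a + c b) \<and> (\<forall>a b. c (a * b) = c a * c b) \<and> c 1 = 1 \<and>
    (\<forall>a x. c a * x = x * c a) \<and>
    \<comment> \<open>identities of objects\<close>
    (\<forall>A\<in>Seq r t. idm G A * idm G A = idm G A) \<and>
    (\<forall>A\<in>Seq r t. \<forall>B\<in>Seq r t. A \<noteq> B \<longrightarrow> idm G A * idm G B = 0) \<and>
    \<comment> \<open>sources and targets of generators\<close>
    (\<forall>A\<in>Seq r t. \<forall>x B f. (B, f) \<in> step G A x \<longrightarrow> mor G A B f) \<and>
    \<comment> \<open>(1)\<close>
    (\<forall>i. rel G r t [S i, S i] []) \<and>
    \<comment> \<open>(2)\<close>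
    (\<forall>i j. (i + 1 < j \<or> j + 1 < i) \<longrightarrow> rel G r t [S i, S j] [S j, S i]) \<and>
    (\<forall>i. rel G r t [S i, S (i + 1), S i] [S (i + 1), S i, S (i + 1)]) \<and>
    (\<forall>i j. j \<noteq> i \<and> j \<noteq> i + 1 \<longrightarrow> rel G r t [S i, Y j] [Y j, S i]) \<and>
    \<comment> \<open>(3)\<close>
    (\<forall>A\<in>Seq r t. \<forall>i. 1 \<le> i \<and> i < length A \<and> ent A i \<noteq> ent A (i + 1) \<longrightarrow>
        ge G A i * ge G A i = c (\<omega> 0) * ge G A i) \<and>
    \<comment> \<open>(4)\<close>
    (\<forall>A\<in>Seq r t. 2 \<le> length A \<and> ent A 1 = 1 \<and> ent A 2 = -1 \<longrightarrow>
        (\<forall>k. ge G A 1 * gy G A 1 ^ k * ge G A 1 = c (\<omega> k) * ge G A 1)) \<and>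
    \<comment> \<open>(5)\<close>
    (\<forall>i j. (i + 1 < j \<or> j + 1 < i) \<longrightarrow> rel G r t [S i, E j] [E j, S i]) \<and>
    (\<forall>i j. (i + 1 < j \<or> j + 1 < i) \<longrightarrow> rel G r t [E i, E j] [E j, E i]) \<and>
    (\<forall>i j. j \<noteq> i \<and> j \<noteq> i + 1 \<longrightarrow> rel G r t [E i, Y j] [Y j, E i]) \<and>
    (\<forall>i j. rel G r t [Y i, Y j] [Y j, Y i]) \<and>
    \<comment> \<open>(6)\<close>
    (\<forall>i. rel G r t [Sh i, E i] [E i]) \<and>
    (\<forall>i. rel G r t [E i, Sh i] [E i]) \<and>
    (\<forall>i. rel G r t [S i, E (i + 1), E i] [S (i + 1), E i]) \<and>
    (\<forall>i. rel G r t [E i, E (i + 1), S i] [E i, S (i + 1)]) \<and>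
    (\<forall>i. rel G r t [E (i + 1), E i, S (i + 1)] [E (i + 1), S i]) \<and>
    (\<forall>i. rel G r t [S (i + 1), E i, E (i + 1)] [S i, E (i + 1)]) \<and>
    (\<forall>i. rel G r t [E (i + 1), E i, E (i + 1)] [E (i + 1)]) \<and>
    (\<forall>i. rel G r t [E i, E (i + 1), E i] [E i]) \<and>
    \<comment> \<open>(7)\<close>
    (\<forall>A\<in>Seq r t. \<forall>i. 1 \<le> i \<and> i < length A \<and> ent A i = ent A (i + 1) \<longrightarrow>
        gs G A i * gy G A i - gy G A (i + 1) * gs G A i = - idm G A \<and>
        gs G A i * gy G A (i + 1) - gy G A i * gs G A i = idm G A) \<and>
    (\<forall>A\<in>Seq r t. \<forall>i. 1 \<le> i \<and> i < length A \<and> ent A i \<noteq> ent A (i + 1) \<longrightarrow>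
        gsh G A i * gy G A i - gy G (swp i A) (i + 1) * gsh G A i = geh G A i \<and>
        gsh G A i * gy G A (i + 1) - gy G (swp i A) i * gsh G A i = - geh G A i) \<and>
    \<comment> \<open>(8)\<close>
    (\<forall>A\<in>Seq r t. \<forall>i B f. (B, f) \<in> step G A (E i) \<longrightarrow>
        f * (gy G A i + gy G A (i + 1)) = 0 \<and> (gy G B i + gy G B (i + 1)) * f = 0)"

text \<open>W_1(-u)/u = sum_k omega_k (-1)^k u^{-k-1}, as an fps in x = u^{-1}\<close>
definition W1neg_div_u :: "(nat \<Rightarrow> complex) \<Rightarrow> complex fps" where
  "W1neg_div_u \<omega> = Abs_fps (\<lambda>m. if m = 0 then 0 else (-1) ^ (m - 1) * \<omega> (m - 1))"

text \<open>W_1^*(u)/u = W_1(-u)/(u - W_1(-u)) = (W_1(-u)/u) / (1 - W_1(-u)/u)\<close>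
definition Wstar_div_u :: "(nat \<Rightarrow> complex) \<Rightarrow> complex fps" where
  "Wstar_div_u \<omega> = W1neg_div_u \<omega> * inverse (1 - W1neg_div_u \<omega>)"

end

theory Submission
  imports Defs
begin

text \<open>Write \<open>A = (1,-1,\<dots>)\<close> and \<open>A' = (-1,1,\<dots>)\<close>, and let \<open>s = \<hat>s\<^sub>1 : A \<rightarrow> A'\<close>,
  \<open>s' = \<hat>s\<^sub>1 : A' \<rightarrow> A\<close> and \<open>e = e\<^sub>1\<^sup>(\<^sup>A\<^sup>)\<close>. Relations (1) and (6) give \<open>s' s = 1\<^sub>A\<close> and
  \<open>e\<^sub>1\<^sup>(\<^sup>A\<^sup>'\<^sup>) = s e s'\<close>, and relation (7) becomes \<open>y\<^sub>1 s = s (y\<^sub>2 + e)\<close>; hence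
  \<open>e\<^sub>1\<^sup>(\<^sup>A\<^sup>'\<^sup>) y\<^sub>1\<^sup>k e\<^sub>1\<^sup>(\<^sup>A\<^sup>'\<^sup>) = s (e (y\<^sub>2 + e)\<^sup>k e) s'\<close>. By (8) and (4), \<open>e y\<^sub>2\<^sup>j e = (-1)\<^sup>j \<omega>\<^sub>j e\<close>.
  Cutting each word of \<open>e (y\<^sub>2 + e)\<^sup>k e\<close> at its first inner factor \<open>e\<close> shows that the scalars
  \<open>q\<^sub>k\<^sub>+\<^sub>1\<close> with \<open>e (y\<^sub>2 + e)\<^sup>k e = q\<^sub>k\<^sub>+\<^sub>1 e\<close> obey the recursion \<open>q = w + w q\<close>,
  \<open>w = W\<^sub>1(-u)/u\<close>, whose solution is \<open>q = w / (1 - w) = W\<^sup>*\<^sub>1(u)/u\<close>.\<close>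

lemma mult_power_eq_of_mult_eq:
  fixes e a b :: "'a::monoid_mult"
  assumes "e * b = e * a" and "a * b = b * a"
  shows "e * b ^ j = e * a ^ j"
proof (induction j)
  case (Suc j)
  have "e * b ^ Suc j = e * b ^ j * b"
    by (simp add: power_Suc2 mult.assoc del: power_Suc)
  also have "\<dots> = e * a ^ j * b"
    by (simp add: Suc)
  also have "\<dots> = e * b * a ^ j"
    by (simp add: mult.assoc power_commuting_commutes[OF assms(2)])
  also have "\<dots> = e * a ^ Suc j"
    by (simp add: assms(1) mult.assoc)
  finally show ?case .
qed simp

lemma power_mult_eq_mult_power:
  fixes y s X :: "'a::monoid_mult"
  assumes "y * s = s * X"
  shows "y ^ k * s = s * X ^ k"
proof (induction k)
  case (Suc k)
  have "y ^ Suc k * s = y * (y ^ k * s)" by (simp add: mult.assoc)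
  also have "\<dots> = y * s * X ^ k" by (simp add: Suc mult.assoc)
  also have "\<dots> = s * X ^ Suc k" by (simp add: assms mult.assoc)
  finally show ?case .
qed simp

lemma conjugate_sandwich:
  fixes y s s' e X :: "'a::monoid_mult"
  assumes "y * s = s * X" and "e * (s' * s) = e"
  shows "(s * e * s') * y ^ k * (s * e * s') = s * (e * X ^ k * e) * s'"
proof -
  have "(s * e * s') * y ^ k * (s * e * s') = s * (e * (s' * (y ^ k * s))) * e * s'"
    by (simp add: mult.assoc)
  also have "\<dots> = s * (e * (s' * s) * X ^ k) * e * s'"
    by (simp add: power_mult_eq_mult_power[OF assms(1)] mult.assoc)
  finally show ?thesis by (simp add: assms(2) mult.assoc)
qed

lemma sandwich_power_expand:
  fixes e y :: "'a::ring_1"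
  assumes ev: "\<And>j. e * y ^ j * e = a j * e"
  shows "e * y ^ j * (y + e) ^ k * e
           = a (j + k) * e + (\<Sum>i<k. a (j + i) * (e * (y + e) ^ (k - 1 - i) * e))"
proof (induction k arbitrary: j)
  case 0
  then show ?case using ev by simp
next
  case (Suc k)
  have "e * y ^ j * (y + e) ^ Suc k * e = e * y ^ j * (y + e) * (y + e) ^ k * e"
    by (simp only: power_Suc mult.assoc)
  also have "\<dots> = e * (y ^ j * y) * (y + e) ^ k * e + (e * y ^ j * e) * (y + e) ^ k * e"
    by (simp add: algebra_simps)
  also have "\<dots> = e * y ^ Suc j * (y + e) ^ k * e + (e * y ^ j * e) * (y + e) ^ k * e"
    by (simp only: power_Suc2)
  also have "\<dots> = a (Suc j + k) * e + (\<Sum>i<k. a (Suc j + i) * (e * (y + e) ^ (k - 1 - i) * e))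
                   + a j * (e * (y + e) ^ k * e)"
    using Suc.IH[of "Suc j"] ev[of j] by (simp add: mult.assoc)
  also have "\<dots> = a (j + Suc k) * e + (\<Sum>i<Suc k. a (j + i) * (e * (y + e) ^ (Suc k - 1 - i) * e))"
    unfolding sum.lessThan_Suc_shift by (simp add: algebra_simps)
  finally show ?case .
qed

lemma fps_mult_inverse_one_minus_nth_Suc:
  fixes w :: "'a::field fps"
  assumes w0: "fps_nth w 0 = 0"
  defines "W \<equiv> w * inverse (1 - w)"
  shows "fps_nth W (Suc k) = fps_nth w (Suc k) + (\<Sum>i<k. fps_nth w (Suc i) * fps_nth W (k - i))"
proof -
  have W_nth_0: "fps_nth W 0 = 0" by (simp add: W_def w0)
  have "W * (1 - w) = w"
    using inverse_mult_eq_1[of "1 - w"] w0 by (simp add: W_def mult.assoc)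
  then have "W = w + w * W" by (simp add: algebra_simps)
  then have "fps_nth W (Suc k) = fps_nth w (Suc k) + (\<Sum>i=0..Suc k. fps_nth w i * fps_nth W (Suc k - i))"
    by (metis fps_add_nth fps_mult_nth)
  also have "(\<Sum>i=0..Suc k. fps_nth w i * fps_nth W (Suc k - i)) = (\<Sum>i\<le>k. fps_nth w (Suc i) * fps_nth W (k - i))"
    unfolding sum.atLeast0_atMost_Suc_shift by (simp add: w0 atLeast0AtMost)
  also have "\<dots> = (\<Sum>i<k. fps_nth w (Suc i) * fps_nth W (k - i))"
    by (simp add: lessThan_Suc_atMost[symmetric] W_nth_0)
  finally show ?thesis .
qed

lemma Wstar_div_u_nth_0: "fps_nth (Wstar_div_u \<omega>) 0 = 0"
  by (simp add: Wstar_div_u_def W1neg_div_u_def)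

lemma Wstar_div_u_nth_Suc:
  "fps_nth (Wstar_div_u \<omega>) (Suc k)
     = (-1) ^ k * \<omega> k + (\<Sum>i<k. ((-1) ^ i * \<omega> i) * fps_nth (Wstar_div_u \<omega>) (k - i))"
  using fps_mult_inverse_one_minus_nth_Suc[of "W1neg_div_u \<omega>" k]
  by (simp add: Wstar_div_u_def W1neg_div_u_def)

locale central_ring_hom =
  fixes c :: "complex \<Rightarrow> 'a::ring_1"
  assumes hom_add: "c (a + b) = c a + c b"
    and hom_mult: "c (a * b) = c a * c b"
    and hom_one: "c 1 = 1"
    and central: "c a * x = x * c a"
begin

lemma hom_zero: "c 0 = 0"
  using hom_add[of 0 0] by simp

lemma hom_sum: "c (sum f A) = (\<Sum>i\<in>A. c (f i))"
  by (induction A rule: infinite_finite_induct) (simp_all add: hom_zero hom_add)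

lemma hom_minus_one: "c (-1) = -1"
  using hom_add[of "-1" 1] by (simp add: hom_zero hom_one eq_neg_iff_add_eq_0)

lemma hom_power: "c (a ^ j) = c a ^ j"
  by (induction j) (simp_all add: hom_one hom_mult)

lemma sandwich_power:
  fixes e y :: 'a
  assumes ev: "\<And>j. e * y ^ j * e = c (v j) * e"
    and rec: "\<And>k. q (Suc k) = v k + (\<Sum>i<k. v i * q (k - i))"
  shows "e * (y + e) ^ k * e = c (q (Suc k)) * e"
proof (induction k rule: less_induct)
  case (less k)
  have "e * (y + e) ^ k * e = c (v k) * e + (\<Sum>i<k. c (v i) * (e * (y + e) ^ (k - 1 - i) * e))"
    using sandwich_power_expand[OF ev, of 0 k] by simp
  also have "\<dots> = c (v k) * e + (\<Sum>i<k. c (v i * q (k - i)) * e)"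
    using less by (intro arg_cong2[where f = "(+)"] sum.cong) (simp_all add: hom_mult mult.assoc Suc_diff_Suc)
  also have "\<dots> = c (q (Suc k)) * e"
    by (simp add: rec hom_add hom_sum sum_distrib_right distrib_right)
  finally show ?case .
qed

end

lemma is_VB_central_ring_hom: "is_VB r t \<omega> c G \<Longrightarrow> central_ring_hom c"
  unfolding is_VB_def central_ring_hom_def by (elim conjE) (intro conjI; assumption)

lemma
  assumes "is_VB r t \<omega> c G"
  shows is_VB_idm_idem[rule_format]: "\<forall>A\<in>Seq r t. idm G A * idm G A = idm G A"
    and is_VB_mor[rule_format]: "\<forall>A\<in>Seq r t. \<forall>x B f. (B, f) \<in> step G A x \<longrightarrow> mor G A B f"
    and is_VB_rel_S_S[rule_format]: "\<forall>i. rel G r t [S i, S i] []"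
    and is_VB_e_y_power_e[rule_format]: "\<forall>A\<in>Seq r t. 2 \<le> length A \<and> ent A 1 = 1 \<and> ent A 2 = -1 \<longrightarrow>
        (\<forall>k. ge G A 1 * gy G A 1 ^ k * ge G A 1 = c (\<omega> k) * ge G A 1)"
    and is_VB_rel_Y_Y[rule_format]: "\<forall>i j. rel G r t [Y i, Y j] [Y j, Y i]"
    and is_VB_rel_Sh_E[rule_format]: "\<forall>i. rel G r t [Sh i, E i] [E i]"
    and is_VB_rel_E_Sh[rule_format]: "\<forall>i. rel G r t [E i, Sh i] [E i]"
    and is_VB_hat_s_y[rule_format]: "\<forall>A\<in>Seq r t. \<forall>i. 1 \<le> i \<and> i < length A \<and> ent A i \<noteq> ent A (i + 1) \<longrightarrow>
        gsh G A i * gy G A i - gy G (swp i A) (i + 1) * gsh G A i = geh G A i \<and>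
        gsh G A i * gy G A (i + 1) - gy G (swp i A) i * gsh G A i = - geh G A i"
    and is_VB_e_y_sum[rule_format]: "\<forall>A\<in>Seq r t. \<forall>i B f. (B, f) \<in> step G A (E i) \<longrightarrow>
        f * (gy G A i + gy G A (i + 1)) = 0 \<and> (gy G B i + gy G B (i + 1)) * f = 0"
  by (insert assms[unfolded is_VB_def]) (elim conjE, assumption)+

lemma rel_eq:
  assumes "rel G r t w1 w2" and "A \<in> Seq r t"
    and "(B, f) \<in> comp G A w1" and "(B, g) \<in> comp G A w2"
  shows "f = g"
  using assms unfolding rel_def by blast

lemma comp_Nil: "(A, idm G A) \<in> comp G A []"
  by (simp add: comp_def)

lemma Seq_swap_head:
  "a # b # rest \<in> Seq r t \<Longrightarrow> b # a # rest \<in> Seq r t"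
  by (auto simp: Seq_def)

locale VB_first_swap =
  fixes r t :: nat and \<omega> :: "nat \<Rightarrow> complex" and c :: "complex \<Rightarrow> 'a::ring_1"
    and G :: "'a vbgens" and rest :: "int list"
  assumes VB: "is_VB r t \<omega> c G"
    and Seq_A': "(-1) # 1 # rest \<in> Seq r t"
begin

abbreviation "A \<equiv> (1::int) # (-1) # rest"
abbreviation "A' \<equiv> (-1::int) # 1 # rest"
abbreviation "s \<equiv> gsh G A 1"
abbreviation "s' \<equiv> gsh G A' 1"
abbreviation "e \<equiv> ge G A 1"
abbreviation "e' \<equiv> ge G A' 1"
abbreviation "eh \<equiv> geh G A 1"

lemma Seq_A: "A \<in> Seq r t"
  using Seq_swap_head[OF Seq_A'] .

sublocale central_ring_hom c
  using is_VB_central_ring_hom[OF VB] .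

text \<open>Keeps the generator index \<open>1\<close> from being rewritten to \<open>Suc 0\<close>, which would
  stop the relations below from applying as rewrite rules.\<close>
declare One_nat_def [simp del]

lemma idm_mult:
  assumes "X \<in> Seq r t" "B \<in> Seq r t" "(B, f) \<in> step G X x"
  shows "idm G B * f = f" and "f * idm G X = f"
proof -
  have mor: "idm G B * f * idm G X = f"
    using is_VB_mor[OF VB assms(1,3)] unfolding mor_def .
  show "idm G B * f = f" by (metis mor is_VB_idm_idem[OF VB assms(2)] mult.assoc)
  show "f * idm G X = f" by (metis mor is_VB_idm_idem[OF VB assms(1)] mult.assoc)
qed

lemma comp_single:
  assumes "X \<in> Seq r t" "B \<in> Seq r t" "(B, f) \<in> step G X x"
  shows "(B, f) \<in> comp G X [x]"
  using assms idm_mult(1)[OF assms] by (force simp: comp_def)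

lemma comp_double:
  assumes "X \<in> Seq r t" "B \<in> Seq r t" "C \<in> Seq r t"
    and "(B, f) \<in> step G X x" "(C, g) \<in> step G B z"
  shows "(C, g * f) \<in> comp G X [z, x]"
  using assms idm_mult(1)[OF assms(2,3,5)] by (force simp: comp_def)

lemma step_s: "(A', s) \<in> step G A (Sh 1)" "(A', s) \<in> step G A (S 1)"
  and step_s': "(A, s') \<in> step G A' (Sh 1)" "(A, s') \<in> step G A' (S 1)"
  and step_e: "(A, e) \<in> step G A (E 1)"
  and step_e': "(A', e') \<in> step G A' (E 1)"
  and step_eh: "(A', eh) \<in> step G A (E 1)"
  and step_y: "(A, gy G A 1) \<in> step G A (Y 1)" "(A, gy G A 2) \<in> step G A (Y 2)"
  by (simp_all add: stepSh_def stepEp_def stepEh_def swp_def ent_def One_nat_def)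

lemma swap_inverse: "s' * s = idm G A"
  using rel_eq[OF is_VB_rel_S_S[OF VB] Seq_A
      comp_double[OF Seq_A Seq_A' Seq_A step_s(2) step_s'(2)] comp_Nil] .

lemma hat_e_eq: "s * e = eh"
  using rel_eq[OF is_VB_rel_Sh_E[OF VB] Seq_A
      comp_double[OF Seq_A Seq_A Seq_A' step_e step_s(1)] comp_single[OF Seq_A Seq_A' step_eh]] .

lemma e'_conj: "e' = s * e * s'"
proof -
  have "eh * s' = e'"
    using rel_eq[OF is_VB_rel_E_Sh[OF VB] Seq_A'
        comp_double[OF Seq_A' Seq_A Seq_A' step_s'(1) step_eh] comp_single[OF Seq_A' Seq_A' step_e']] .
  then show ?thesis by (simp add: hat_e_eq)
qed

lemma y_mult_s: "gy G A' 1 * s = s * (gy G A 2 + e)"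
proof -
  have "s * gy G A 2 - gy G A' 1 * s = - eh"
    using is_VB_hat_s_y[OF VB Seq_A, of 1] by (simp add: ent_def swp_def One_nat_def numeral_2_eq_2)
  then show ?thesis by (simp add: hat_e_eq[symmetric] algebra_simps eq_neg_iff_add_eq_0)
qed

lemma e_y2_power_e: "e * gy G A 2 ^ j * e = c ((-1) ^ j * \<omega> j) * e"
proof -
  have y_comm: "gy G A 1 * gy G A 2 = gy G A 2 * gy G A 1"
    using rel_eq[OF is_VB_rel_Y_Y[OF VB] Seq_A comp_double[OF Seq_A Seq_A Seq_A step_y(2,1)]
        comp_double[OF Seq_A Seq_A Seq_A step_y]] .
  have "e * (gy G A 1 + gy G A 2) = 0"
    using is_VB_e_y_sum[OF VB Seq_A step_e] by (simp add: numeral_2_eq_2)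
  then have "e * gy G A 2 = e * (- gy G A 1)"
    by (simp add: algebra_simps eq_neg_iff_add_eq_0)
  then have "e * gy G A 2 ^ j = e * (- gy G A 1) ^ j"
    by (rule mult_power_eq_of_mult_eq) (simp add: y_comm)
  then have "e * gy G A 2 ^ j * e = e * (c ((-1) ^ j) * gy G A 1 ^ j) * e"
    by (simp add: power_minus' hom_power hom_minus_one)
  also have "\<dots> = c ((-1) ^ j) * (e * gy G A 1 ^ j * e)"
    by (simp only: mult.assoc[symmetric] central[of _ e, symmetric])
  also have "\<dots> = c ((-1) ^ j) * (c (\<omega> j) * e)"
    using is_VB_e_y_power_e[OF VB Seq_A] by (simp add: ent_def)
  also have "\<dots> = c ((-1) ^ j * \<omega> j) * e"
    by (simp only: hom_mult mult.assoc)
  finally show ?thesis .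
qed

lemma e'_y_power_e': "e' * gy G A' 1 ^ k * e' = c (fps_nth (Wstar_div_u \<omega>) (Suc k)) * e'"
proof -
  have "e * (s' * s) = e"
    using idm_mult(2)[OF Seq_A Seq_A step_e] by (simp add: swap_inverse)
  then have "e' * gy G A' 1 ^ k * e' = s * (e * (gy G A 2 + e) ^ k * e) * s'"
    unfolding e'_conj by (rule conjugate_sandwich[OF y_mult_s])
  also have "\<dots> = s * (c (fps_nth (Wstar_div_u \<omega>) (Suc k)) * e) * s'"
    using sandwich_power[OF e_y2_power_e Wstar_div_u_nth_Suc] by simp
  finally show ?thesis by (simp add: e'_conj central mult.assoc)
qed

end

theorem mainTheorem3:
  fixes r t :: nat and \<omega> :: "nat \<Rightarrow> complex" and c :: "complex \<Rightarrow> 'a::ring_1"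
    and G :: "'a vbgens" and A' :: "int list"
  assumes "is_VB r t \<omega> c G"
    and "A' \<in> Seq r t" and "2 \<le> length A'" and "ent A' 1 = -1" and "ent A' 2 = 1"
  shows "\<forall>m. (if m = 0 then 0 else ge G A' 1 * gy G A' 1 ^ (m - 1) * ge G A' 1)
             = c (fps_nth (Wstar_div_u \<omega>) m) * ge G A' 1"
proof
  fix m
  obtain rest where A': "A' = (-1) # 1 # rest"
    using assms(3-5) by (cases A'; cases "tl A'") (auto simp: ent_def)
  interpret VB_first_swap r t \<omega> c G rest
    using assms(1,2) by unfold_locales (simp_all add: A')
  show "(if m = 0 then 0 else ge G A' 1 * gy G A' 1 ^ (m - 1) * ge G A' 1)
          = c (fps_nth (Wstar_div_u \<omega>) m) * ge G A' 1"
    by (cases m) (simp_all add: A' hom_zero Wstar_div_u_nth_0 e'_y_power_e' del: One_nat_def)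
qed

end
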